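(* Let $\Sigma=[\sigma_{hk}]$ be a $p\times p$ Hermitian positive definite complex matrix and $\alpha=(n_1,m_1,\dots,n_p,m_p)\in\mathbb Z_{\ge0}^{2p}$, with $N=\{h:n_h\neq0\}$, $M=\{k:m_k\neq0\}$, $S^N_h=\{k\in M:\sigma_{hk}\neq0\}$ for $h\in N$. For each $h\in N$ with $S^N_h\neq\emptyset$ let $A_h$ be the $2p\times\#S^N_h$ matrix with columns $a_{(hk)}=\sigma_{hk}(m_k e_h+n_h e_{p+k})$, $k\in S^N_h$, and let $t_h=(\nu(\alpha^-_{hk}))_{k\in S^N_h}$, where $\alpha^-_{hk}=\alpha-\epsilon_{2h-1}-\epsilon_{2k}$. Let $A=[A_h]_{h\in N,\,S^N_h\neq\emptyset}$ (blocks placed side by side), $t$ the column vector obtained by stacking the $t_h$ in the same order, and $b=\sum_{h\in N}e_h+\sum_{k\in M}e_{p+k}$. Then $$A\,t=\nu(\alpha)\,b .$$ Moreover, for each $h\notin N$ the $h$-th row of $A$ is null and $b_h=0$, and for each $k\notin M$ the $(p+k)$-th row of $A$ is null and $b_{p+k}=0$.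
   Context: $\mathcal{CN}_p(\Sigma)$ has density $\varphi(z;\Sigma)=\frac{1}{\pi^p\det\Sigma}\exp(-z^*\Sigma^{-1}z)$ on $\mathbb C^p\cong\mathbb R^{2p}$; $\nu(\alpha)=\int_{\mathbb C^p}\prod_{j=1}^p z_j^{n_j}\bar z_j^{m_j}\varphi(z;\Sigma)\,dz$. Here $e_1,\dots,e_{2p}$ denotes the canonical basis of the space of $2p$-vectors used to build $A$ and $b$, and $\epsilon_1,\dots,\epsilon_{2p}$ the canonical basis of $\mathbb Z^{2p}$ in the multi-index notation (the paper uses the same symbol $e_j$ for both). *)

theory Defs
  imports "HOL-Analysis.Analysis"
begin

text \<open>The multi-index alpha = (n_1,m_1,...,n_p,m_p) is represented by the pair of
  functions n m :: 'p => nat.  Vectors in C^{2p} are functions on \<open>'p + 'p\<close>: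
  \<open>Inl h\<close> is coordinate h, \<open>Inr k\<close> is coordinate p+k.\<close>

definition herm_quad :: "complex ^ 'p ^ 'p \<Rightarrow> complex ^ 'p \<Rightarrow> complex" where
  "herm_quad S z = (\<Sum>i\<in>UNIV. \<Sum>j\<in>UNIV. cnj (z $ i) * S $ i $ j * z $ j)"

definition hermitian_pd :: "complex ^ 'p ^ 'p \<Rightarrow> bool" where
  "hermitian_pd S \<longleftrightarrow> (\<forall>i j. S $ i $ j = cnj (S $ j $ i)) \<and>
     (\<forall>z. z \<noteq> 0 \<longrightarrow> herm_quad S z \<in> \<real> \<and> Re (herm_quad S z) > 0)"

definition cgauss_density :: "complex ^ 'p ^ 'p \<Rightarrow> complex ^ 'p \<Rightarrow> complex" where
  "cgauss_density S z =
     exp (- herm_quad (matrix_inv S) z) / (complex_of_real (pi ^ CARD('p)) * det S)"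

definition nu :: "complex ^ 'p ^ 'p \<Rightarrow> ('p \<Rightarrow> nat) \<Rightarrow> ('p \<Rightarrow> nat) \<Rightarrow> complex" where
  "nu S n m = (LINT z|lborel. (\<Prod>j\<in>UNIV. (z $ j) ^ n j * (cnj (z $ j)) ^ m j) * cgauss_density S z)"

definition Nset :: "('p \<Rightarrow> nat) \<Rightarrow> 'p set" where
  "Nset n = {h. n h \<noteq> 0}"

definition Mset :: "('p \<Rightarrow> nat) \<Rightarrow> 'p set" where
  "Mset m = {k. m k \<noteq> 0}"

definition SN :: "complex ^ 'p ^ 'p \<Rightarrow> ('p \<Rightarrow> nat) \<Rightarrow> 'p \<Rightarrow> 'p set" where
  "SN S m h = {k \<in> Mset m. S $ h $ k \<noteq> 0}"

text \<open>Index set of the columns of A: pairs (h,k) with h in N and k in S^N_h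
  (the blocks A_h with S^N_h empty contribute no columns).\<close>
definition colset :: "complex ^ 'p ^ 'p \<Rightarrow> ('p \<Rightarrow> nat) \<Rightarrow> ('p \<Rightarrow> nat) \<Rightarrow> ('p \<times> 'p) set" where
  "colset S n m = {(h, k). h \<in> Nset n \<and> k \<in> SN S m h}"

definition Amat :: "complex ^ 'p ^ 'p \<Rightarrow> ('p \<Rightarrow> nat) \<Rightarrow> ('p \<Rightarrow> nat) \<Rightarrow> 'p + 'p \<Rightarrow> 'p \<times> 'p \<Rightarrow> complex" where
  "Amat S n m r c = (case c of (h, k) \<Rightarrow>
     S $ h $ k * ((if r = Inl h then of_nat (m k) else 0) + (if r = Inr k then of_nat (n h) else 0)))"

text \<open>alpha^-_{hk} = alpha - eps_{2h-1} - eps_{2k}, i.e. n_h and m_k decreased by one.\<close>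
definition tvec :: "complex ^ 'p ^ 'p \<Rightarrow> ('p \<Rightarrow> nat) \<Rightarrow> ('p \<Rightarrow> nat) \<Rightarrow> 'p \<times> 'p \<Rightarrow> complex" where
  "tvec S n m c = (case c of (h, k) \<Rightarrow> nu S (n(h := n h - 1)) (m(k := m k - 1)))"

definition bvec :: "('p \<Rightarrow> nat) \<Rightarrow> ('p \<Rightarrow> nat) \<Rightarrow> 'p + 'p \<Rightarrow> complex" where
  "bvec n m r = (case r of Inl h \<Rightarrow> (if h \<in> Nset n then 1 else 0)
                          | Inr k \<Rightarrow> (if k \<in> Mset m then 1 else 0))"

end

theory Submission
  imports Defs "HOL-Probability.Distributions"
begin

text \<open>
  Up to the factor pi^p det Sigma, nu(alpha) is the moment of the monomial z^n conj(z)^m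
  against exp(-z* Q z) with Q = Sigma^-1. The integral of any directional derivative of such
  an integrand vanishes; taking the directions c e_i with c = 1 and c = i separates the two
  Wirtinger derivatives, so the moment of z^a conj(z)^b (Q z)_i is b_i times the moment with
  b_i lowered by one, and symmetrically for (z* Q)_i. Since z_h = sum_i sigma_hi (Q z)_i, this
  gives nu(alpha) = sum_k sigma_hk m_k nu(alpha^-_hk) whenever n_h > 0, which is row h of
  A t = nu(alpha) b; the rows p + k follow in the same way from
  conj(z_k) = sum_i (z* Q)_i sigma_ik.
\<close>

section \<open>Integration by parts and Gaussian integrability on Euclidean space\<close>

lemma lborel_integrable_translate:
  fixes f :: "'a::euclidean_space \<Rightarrow> 'b::{banach, second_countable_topology}"
  assumes "integrable lborel f"
  shows "integrable lborel (\<lambda>z. f (z + w))"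
proof -
  have "integrable (distr lborel borel ((+) w)) f"
    using assms by (simp add: lborel_distr_plus)
  then show ?thesis
    using assms by (subst (asm) integrable_distr_eq) (auto simp: add.commute)
qed

lemma lborel_integral_translate:
  fixes f :: "'a::euclidean_space \<Rightarrow> 'b::{banach, second_countable_topology}"
  assumes "f \<in> borel_measurable borel"
  shows "(\<integral>z. f (z + w) \<partial>lborel) = integral\<^sup>L lborel f"
proof -
  have "integral\<^sup>L lborel f = integral\<^sup>L (distr lborel borel ((+) w)) f"
    by (simp add: lborel_distr_plus)
  also have "\<dots> = (\<integral>z. f (w + z) \<partial>lborel)"
    using assms by (rule integral_distr[rotated]) simp
  finally show ?thesis by (simp add: add.commute)
qed

lemma lborel_integral_directional_derivative_eq_0:
  fixes g g' :: "'a::euclidean_space \<Rightarrow> 'b::euclidean_space"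
  assumes deriv: "\<And>z. ((\<lambda>t. g (z + t *\<^sub>R v)) has_vector_derivative g' z) (at 0)"
    and cont: "continuous_on UNIV g'"
    and ig: "integrable lborel g" and ig': "integrable lborel g'"
  shows "integral\<^sup>L lborel g' = 0"
proof -
  have g'm: "g' \<in> borel_measurable borel"
    using cont by (rule borel_measurable_continuous_onI)
  have deriv_at: "((\<lambda>s. g (z + s *\<^sub>R v)) has_vector_derivative g' (z + t *\<^sub>R v)) (at t)" for z t
  proof -
    have "((\<lambda>u. g ((z + t *\<^sub>R v) + u *\<^sub>R v)) \<circ> (\<lambda>s. s - t) has_vector_derivative 1 *\<^sub>R g' (z + t *\<^sub>R v)) (at t)"
      by (rule vector_diff_chain_at) (auto intro!: derivative_eq_intros deriv)
    moreover have "(\<lambda>u. g ((z + t *\<^sub>R v) + u *\<^sub>R v)) \<circ> (\<lambda>s. s - t) = (\<lambda>s. g (z + s *\<^sub>R v))"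
      by (auto simp: o_def algebra_simps)
    ultimately show ?thesis by simp
  qed
  have segment: "(LINT s:{0..1}|lborel. g' (z + s *\<^sub>R v)) = g (z + v) - g z" for z
  proof -
    have si: "set_integrable lborel {0..1::real} (\<lambda>s. g' (z + s *\<^sub>R v))"
      unfolding set_integrable_def
      by (rule borel_integrable_compact) (auto intro!: continuous_on_compose2[OF cont] continuous_intros)
    have "((\<lambda>s. g' (z + s *\<^sub>R v)) has_integral (g (z + 1 *\<^sub>R v) - g (z + 0 *\<^sub>R v))) {0..1}"
      by (rule fundamental_theorem_of_calculus) (auto intro: has_vector_derivative_at_within deriv_at)
    then show ?thesis
      using set_borel_integral_eq_integral(2)[OF si] by (simp add: integral_unique)
  qed
  define F where "F = (\<lambda>(s::real) z. indicator {0..1} s *\<^sub>R g' (z + s *\<^sub>R v))"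
  have "integrable (lborel \<Otimes>\<^sub>M lborel) (case_prod F)"
  proof (rule lborel_pair.Fubini_integrable)
    show "case_prod F \<in> borel_measurable (lborel \<Otimes>\<^sub>M lborel)"
      unfolding F_def using g'm by measurable
    have "(\<integral>z. norm (F s z) \<partial>lborel) = indicator {0..1} s * (\<integral>z. norm (g' z) \<partial>lborel)" for s
      using lborel_integral_translate[of "\<lambda>z. norm (g' z)" "s *\<^sub>R v"] g'm by (simp add: F_def)
    then show "integrable lborel (\<lambda>s. \<integral>z. norm (case_prod F (s, z)) \<partial>lborel)"
      by simp
    show "AE s in lborel. integrable lborel (\<lambda>z. case_prod F (s, z))"
      using lborel_integrable_translate[OF ig'] by (simp add: F_def)
  qed
  then have "(\<integral>z. (\<integral>s. F s z \<partial>lborel) \<partial>lborel) = (\<integral>s. (\<integral>z. F s z \<partial>lborel) \<partial>lborel)"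
    by (rule lborel_pair.Fubini_integral)
  moreover have "(\<integral>z. (\<integral>s. F s z \<partial>lborel) \<partial>lborel) = (\<integral>z. g (z + v) - g z \<partial>lborel)"
    using segment by (simp add: F_def set_lebesgue_integral_def)
  moreover have "(\<integral>s. (\<integral>z. F s z \<partial>lborel) \<partial>lborel) = integral\<^sup>L lborel g'"
    using lborel_integral_translate[OF g'm] by (simp add: F_def)
  ultimately show ?thesis
    using lborel_integrable_translate[OF ig, of v] lborel_integral_translate[of g v] ig by simp
qed

lemma gaussian_integrable_real:
  fixes c :: real
  assumes "c > 0"
  shows "integrable lborel (\<lambda>x::real. exp (- c * x\<^sup>2))"
proof -
  define \<sigma> where "\<sigma> = sqrt (1 / (2 * c))"
  have \<sigma>: "\<sigma> > 0" "\<sigma>\<^sup>2 = 1 / (2 * c)"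
    using assms by (simp_all add: \<sigma>_def)
  have "sqrt (2 * pi * \<sigma>\<^sup>2) * normal_density 0 \<sigma> x = exp (- c * x\<^sup>2)" for x
    using \<sigma> assms by (simp add: normal_density_def field_simps)
  moreover have "integrable lborel (\<lambda>x. sqrt (2 * pi * \<sigma>\<^sup>2) * normal_density 0 \<sigma> x)"
    using \<sigma> by (intro integrable_mult_right integrable_normal_density)
  ultimately show ?thesis by simp
qed

lemma gaussian_integrable:
  fixes c :: real
  assumes "c > 0"
  shows "integrable lborel (\<lambda>x::'a::euclidean_space. exp (- c * (norm x)\<^sup>2))"
proof -
  interpret product_sigma_finite "\<lambda>_::'a. lborel::real measure" by standard
  define T where "T = (\<lambda>f. \<Sum>b\<in>(Basis::'a set). f b *\<^sub>R b)"
  have Tm: "T \<in> measurable (\<Pi>\<^sub>M b\<in>(Basis::'a set). lborel) borel"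
    unfolding T_def by measurable
  have norm_T: "(norm (T f))\<^sup>2 = (\<Sum>b\<in>Basis. (f b)\<^sup>2)" for f
  proof -
    have "(norm (T f))\<^sup>2 = T f \<bullet> T f"
      by (simp add: power2_norm_eq_inner)
    also have "\<dots> = (\<Sum>b\<in>Basis. (T f \<bullet> b) * (T f \<bullet> b))"
      by (rule euclidean_inner)
    also have "\<dots> = (\<Sum>b\<in>Basis. (f b)\<^sup>2)"
      by (intro sum.cong refl)
        (simp add: T_def inner_sum_left inner_Basis if_distrib sum.delta power2_eq_square cong: if_cong)
    finally show ?thesis .
  qed
  have "integrable (\<Pi>\<^sub>M b\<in>(Basis::'a set). lborel) (\<lambda>f. \<Prod>b\<in>Basis. exp (- c * (f b)\<^sup>2))"
    using product_integrable_prod[where I=Basis and f="\<lambda>_ t. exp (- c * t\<^sup>2)"]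
      gaussian_integrable_real[OF assms] by simp
  moreover have "(\<Prod>b\<in>Basis. exp (- c * (f b)\<^sup>2)) = exp (- c * (norm (T f))\<^sup>2)" for f
    by (simp add: norm_T exp_sum[symmetric] sum_distrib_left sum_negf)
  ultimately have "integrable (distr (\<Pi>\<^sub>M b\<in>(Basis::'a set). lborel) borel T) (\<lambda>x::'a. exp (- c * (norm x)\<^sup>2))"
    by (subst integrable_distr_eq[OF Tm]) auto
  then show ?thesis
    unfolding T_def by (simp add: lborel_eq[symmetric])
qed

lemma power_le_fact_mult_exp:
  fixes y :: real
  assumes "y \<ge> 0"
  shows "y ^ k \<le> fact k * exp y"
proof -
  have "(\<Sum>n\<in>{k}. y ^ n /\<^sub>R fact n) \<le> (\<Sum>n. y ^ n /\<^sub>R fact n)"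
    by (rule sum_le_suminf) (use assms summable_exp_generic[of y] in auto)
  then have "y ^ k / fact k \<le> exp y"
    by (simp add: exp_def divide_inverse_commute)
  then show ?thesis by (simp add: field_simps)
qed

lemma power_mult_gaussian_le:
  fixes r c :: real
  assumes "r \<ge> 0" "c > 0"
  shows "r ^ d * exp (- c * r\<^sup>2) \<le> exp (- c * r\<^sup>2) + fact d * (2 / c) ^ d * exp (- (c / 2) * r\<^sup>2)"
proof -
  have "r ^ d \<le> 1 + (r\<^sup>2) ^ d"
  proof (cases "r \<le> 1")
    case True
    then show ?thesis
      using assms(1) power_le_one[of r d] by (simp add: add_increasing2)
  next
    case False
    then have "r ^ d \<le> (r\<^sup>2) ^ d"
      by (intro power_mono) (auto simp: power2_eq_square)
    then show ?thesis by simp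
  qed
  also have "(r\<^sup>2) ^ d = (2 / c) ^ d * ((c / 2) * r\<^sup>2) ^ d"
    using assms by (simp add: power_mult_distrib[symmetric])
  also have "\<dots> \<le> (2 / c) ^ d * (fact d * exp ((c / 2) * r\<^sup>2))"
    using assms by (intro mult_left_mono power_le_fact_mult_exp) auto
  finally have "r ^ d * exp (- c * r\<^sup>2)
      \<le> (1 + (2 / c) ^ d * (fact d * exp ((c / 2) * r\<^sup>2))) * exp (- c * r\<^sup>2)"
    by (intro mult_right_mono) auto
  also have "\<dots> = exp (- c * r\<^sup>2) + fact d * (2 / c) ^ d * exp (- (c / 2) * r\<^sup>2)"
    by (simp add: algebra_simps exp_add[symmetric])
  finally show ?thesis .
qed

lemma integrable_power_gaussian_bounded:
  fixes f :: "'a::euclidean_space \<Rightarrow> 'b::{banach, second_countable_topology}"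
  assumes "f \<in> borel_measurable lborel" "c > 0"
    and bound: "\<And>z. norm (f z) \<le> norm z ^ d * exp (- c * (norm z)\<^sup>2)"
  shows "integrable lborel f"
proof (rule Bochner_Integration.integrable_bound)
  let ?G = "\<lambda>z::'a. exp (- c * (norm z)\<^sup>2) + fact d * (2 / c) ^ d * exp (- (c / 2) * (norm z)\<^sup>2)"
  show "integrable lborel ?G"
    using \<open>c > 0\<close> by (intro Bochner_Integration.integrable_add integrable_mult_right gaussian_integrable) auto
  show "AE z in lborel. norm (f z) \<le> norm (?G z)"
  proof (rule AE_I2)
    fix z
    have "norm (f z) \<le> ?G z"
      using bound[of z] power_mult_gaussian_le[of "norm z" c d] \<open>c > 0\<close> by simp
    also have "\<dots> \<le> norm (?G z)" by simp
    finally show "norm (f z) \<le> norm (?G z)" .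
  qed
qed (use assms in simp)

section \<open>Positive definite Hermitian forms\<close>

lemma herm_quad_eq_mult_vector: "herm_quad A z = (\<Sum>i\<in>UNIV. cnj (z $ i) * (A *v z) $ i)"
  by (simp add: herm_quad_def matrix_vector_mult_def sum_distrib_left mult.assoc)

lemma herm_quad_scaleR: "herm_quad A (r *\<^sub>R z) = of_real (r\<^sup>2) * herm_quad A z"
  unfolding herm_quad_def vector_scaleR_component
  by (simp add: scaleR_conv_of_real sum_distrib_left power2_eq_square mult_ac)

lemma continuous_on_herm_quad: "continuous_on UNIV (herm_quad A)"
  unfolding herm_quad_def by (intro continuous_intros)

lemma herm_quad_coercive:
  fixes A :: "complex ^ 'p ^ 'p"
  assumes pos: "\<And>z. z \<noteq> 0 \<Longrightarrow> Re (herm_quad A z) > 0"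
  obtains c where "c > 0" "\<And>z. Re (herm_quad A z) \<ge> c * (norm z)\<^sup>2"
proof -
  have cont: "continuous_on (sphere 0 1) (\<lambda>z. Re (herm_quad A z))"
    by (rule continuous_on_subset[of UNIV])
      (auto intro!: continuous_intros continuous_on_compose2[OF continuous_on_herm_quad])
  obtain u0 where u0: "u0 \<in> sphere 0 1"
    and min: "\<And>u. u \<in> sphere 0 1 \<Longrightarrow> Re (herm_quad A u0) \<le> Re (herm_quad A u)"
    using continuous_attains_inf[OF compact_sphere _ cont] by auto
  have "u0 \<noteq> 0"
    using u0 by auto
  then have "Re (herm_quad A u0) > 0"
    by (rule pos)
  moreover have "Re (herm_quad A z) \<ge> Re (herm_quad A u0) * (norm z)\<^sup>2" for z
  proof (cases "z = 0")
    case True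
    then show ?thesis by (simp add: herm_quad_def)
  next
    case False
    define u where "u = (1 / norm z) *\<^sub>R z"
    have zu: "z = norm z *\<^sub>R u"
      using False by (simp add: u_def)
    have "Re (herm_quad A z) = (norm z)\<^sup>2 * Re (herm_quad A u)"
      by (subst zu, subst herm_quad_scaleR) simp
    also have "\<dots> \<ge> (norm z)\<^sup>2 * Re (herm_quad A u0)"
      using False min[of u] by (simp add: u_def mult_left_mono)
    finally show ?thesis by (simp add: mult.commute)
  qed
  ultimately show ?thesis using that by blast
qed

lemma hermitian_pd_matrix_inv:
  fixes S :: "complex ^ 'p ^ 'p"
  assumes "hermitian_pd S"
  shows "S ** matrix_inv S = mat 1" "matrix_inv S ** S = mat 1"
    and "\<And>z. z \<noteq> 0 \<Longrightarrow> Re (herm_quad (matrix_inv S) z) > 0"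
proof -
  have herm: "\<And>i j. cnj (S $ i $ j) = S $ j $ i" and pd: "\<And>z. z \<noteq> 0 \<Longrightarrow> Re (herm_quad S z) > 0"
    using assms unfolding hermitian_pd_def by (metis complex_cnj_cnj)+
  have "x = 0" if "S *v x = 0" for x
    using that pd[of x] by (force simp: herm_quad_eq_mult_vector)
  then have "invertible S"
    by (simp add: invertible_left_inverse matrix_left_invertible_ker)
  then have "S ** matrix_inv S = mat 1 \<and> matrix_inv S ** S = mat 1"
    unfolding matrix_inv_def invertible_def by (rule someI_ex)
  then show SQ: "S ** matrix_inv S = mat 1" and "matrix_inv S ** S = mat 1"
    by auto
  fix z :: "complex ^ 'p"
  assume "z \<noteq> 0"
  define w where "w = matrix_inv S *v z"
  have z: "z = S *v w"
    using SQ by (simp add: w_def matrix_vector_mul_assoc)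
  have "herm_quad (matrix_inv S) z = (\<Sum>i\<in>UNIV. cnj (z $ i) * w $ i)"
    by (simp add: herm_quad_eq_mult_vector w_def)
  also have "\<dots> = (\<Sum>i\<in>UNIV. \<Sum>k\<in>UNIV. cnj (w $ k) * S $ k $ i * w $ i)"
    by (simp add: z matrix_vector_mult_def sum_distrib_left herm mult_ac)
  also have "\<dots> = herm_quad S w"
    unfolding herm_quad_def by (rule sum.swap)
  finally have "herm_quad (matrix_inv S) z = herm_quad S w" .
  moreover have "w \<noteq> 0"
    using \<open>z \<noteq> 0\<close> z by auto
  ultimately show "Re (herm_quad (matrix_inv S) z) > 0"
    using pd by simp
qed

section \<open>Gaussian moments of complex monomials\<close>

definition cmonomial :: "('p::finite \<Rightarrow> nat) \<Rightarrow> ('p \<Rightarrow> nat) \<Rightarrow> complex ^ 'p \<Rightarrow> complex" where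
  "cmonomial a b z = (\<Prod>j\<in>UNIV. (z $ j) ^ a j * cnj (z $ j) ^ b j)"

lemma cmonomial_split:
  "cmonomial a b z = (z $ i) ^ a i * cnj (z $ i) ^ b i * cmonomial (a(i := 0)) (b(i := 0)) z"
proof -
  have "cmonomial (a(i := 0)) (b(i := 0)) z = (\<Prod>j\<in>UNIV - {i}. (z $ j) ^ a j * cnj (z $ j) ^ b j)"
    unfolding cmonomial_def by (auto simp: prod.remove[of UNIV i] intro!: prod.cong)
  then show ?thesis
    by (simp add: cmonomial_def[of a b] prod.remove[of UNIV i])
qed

lemma cmonomial_mult_nth: "cmonomial a b z * z $ k = cmonomial (a(k := Suc (a k))) b z"
  by (subst (1 2) cmonomial_split[where i=k]) simp

lemma cmonomial_mult_cnj_nth: "cmonomial a b z * cnj (z $ k) = cmonomial a (b(k := Suc (b k))) z"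
  by (subst (1 2) cmonomial_split[where i=k]) simp

lemma cmonomial_add_axis:
  "cmonomial (a(i := 0)) (b(i := 0)) (z + t *\<^sub>R axis i c) = cmonomial (a(i := 0)) (b(i := 0)) z"
  unfolding cmonomial_def by (intro prod.cong) (auto simp: axis_def)

lemma continuous_on_cmonomial: "continuous_on UNIV (cmonomial a b)"
  unfolding cmonomial_def by (intro continuous_intros)

lemma norm_cmonomial_le: "norm (cmonomial a b z) \<le> norm z ^ (\<Sum>j\<in>UNIV. a j + b j)"
proof -
  have "norm (cmonomial a b z) = (\<Prod>j\<in>UNIV. norm (z $ j) ^ (a j + b j))"
    by (simp add: cmonomial_def prod_norm[symmetric] norm_mult norm_power power_add)
  also have "\<dots> \<le> (\<Prod>j\<in>UNIV. norm z ^ (a j + b j))"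
    by (intro prod_mono conjI power_mono Finite_Cartesian_Product.norm_nth_le) auto
  also have "\<dots> = norm z ^ (\<Sum>j\<in>UNIV. a j + b j)"
    by (simp add: power_sum)
  finally show ?thesis .
qed

definition herm_quad_dz :: "complex ^ 'p ^ 'p \<Rightarrow> 'p \<Rightarrow> complex ^ 'p \<Rightarrow> complex" where
  "herm_quad_dz Q i z = (\<Sum>k\<in>UNIV. cnj (z $ k) * Q $ k $ i)"

definition herm_quad_dcnj :: "complex ^ 'p ^ 'p \<Rightarrow> 'p \<Rightarrow> complex ^ 'p \<Rightarrow> complex" where
  "herm_quad_dcnj Q i z = (\<Sum>k\<in>UNIV. Q $ i $ k * z $ k)"

lemma herm_quad_add_axis:
  fixes Q :: "complex ^ 'p ^ 'p"
  shows "herm_quad Q (z + t *\<^sub>R axis i c) =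
     herm_quad Q z + of_real t * (cnj c * herm_quad_dcnj Q i z + c * herm_quad_dz Q i z)
     + (of_real t)\<^sup>2 * (cnj c * c * Q $ i $ i)"
proof -
  define d where "d = (\<lambda>j. if j = i then of_real t * c else 0)"
  have comp: "(z + t *\<^sub>R axis i c) $ j = z $ j + d j" for j
    by (simp only: vector_add_component vector_scaleR_component) (simp add: d_def axis_def scaleR_conv_of_real)
  have d_right: "(\<Sum>j\<in>UNIV. X j * d j) = X i * (of_real t * c)" for X :: "'p \<Rightarrow> complex"
    by (simp add: d_def if_distrib[of "\<lambda>y. X _ * y"] cong: if_cong)
  have d_left: "(\<Sum>j\<in>UNIV. cnj (d j) * X j) = (of_real t * cnj c) * X i" for X :: "'p \<Rightarrow> complex"
    by (simp add: d_def if_distrib[of "\<lambda>y. cnj y * X _"] cong: if_cong)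
  have "herm_quad Q (z + t *\<^sub>R axis i c) = herm_quad Q z
      + (\<Sum>j\<in>UNIV. \<Sum>k\<in>UNIV. cnj (z $ j) * Q $ j $ k * d k)
      + (\<Sum>j\<in>UNIV. cnj (d j) * (\<Sum>k\<in>UNIV. Q $ j $ k * z $ k))
      + (\<Sum>j\<in>UNIV. cnj (d j) * (\<Sum>k\<in>UNIV. Q $ j $ k * d k))"
    unfolding herm_quad_def comp by (simp add: algebra_simps sum.distrib sum_distrib_left)
  also have "\<dots> = herm_quad Q z + (\<Sum>j\<in>UNIV. cnj (z $ j) * Q $ j $ i * (of_real t * c))
      + (of_real t * cnj c) * (\<Sum>k\<in>UNIV. Q $ i $ k * z $ k)
      + (of_real t * cnj c) * (Q $ i $ i * (of_real t * c))"
    by (simp only: d_right d_left)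
  also have "\<dots> = herm_quad Q z + of_real t * (cnj c * herm_quad_dcnj Q i z + c * herm_quad_dz Q i z)
      + (of_real t)\<^sup>2 * (cnj c * c * Q $ i $ i)"
    by (simp add: sum_distrib_left sum_distrib_right herm_quad_dz_def herm_quad_dcnj_def
        power2_eq_square algebra_simps)
  finally show ?thesis .
qed

lemma has_vector_derivative_cmonomial_gaussian_axis:
  fixes Q :: "complex ^ 'p ^ 'p"
  shows "((\<lambda>t. cmonomial a b (z + t *\<^sub>R axis i c) * exp (- herm_quad Q (z + t *\<^sub>R axis i c)))
     has_vector_derivative
       exp (- herm_quad Q z) * (of_nat (a i) * c * cmonomial (a(i := a i - 1)) b z
         + of_nat (b i) * cnj c * cmonomial a (b(i := b i - 1)) z
         - cmonomial a b z * (cnj c * herm_quad_dcnj Q i z + c * herm_quad_dz Q i z))) (at 0)"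
proof -
  define \<zeta> where "\<zeta> = z $ i"
  define P where "P = cmonomial (a(i := 0)) (b(i := 0)) z"
  define \<beta> where "\<beta> = cnj c * herm_quad_dcnj Q i z + c * herm_quad_dz Q i z"
  define \<gamma> where "\<gamma> = cnj c * c * Q $ i $ i"
  define q where "q = herm_quad Q z"
  define \<psi> where "\<psi> = (\<lambda>w. (\<zeta> + w * c) ^ a i * (cnj \<zeta> + w * cnj c) ^ b i * P * exp (- (q + w * \<beta> + w\<^sup>2 * \<gamma>)))"
  have \<psi>: "cmonomial a b (z + t *\<^sub>R axis i c) * exp (- herm_quad Q (z + t *\<^sub>R axis i c)) = \<psi> (of_real t)" for t
  proof -
    have "(z + t *\<^sub>R axis i c) $ i = \<zeta> + of_real t * c"
      by (simp only: vector_add_component vector_scaleR_component)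
        (simp add: \<zeta>_def axis_def scaleR_conv_of_real)
    then show ?thesis
      unfolding \<psi>_def
      by (subst cmonomial_split[where i=i]) (simp add: cmonomial_add_axis herm_quad_add_axis P_def \<beta>_def \<gamma>_def q_def)
  qed
  have "(\<psi> has_field_derivative
      exp (- q) * (of_nat (a i) * c * \<zeta> ^ (a i - 1) * cnj \<zeta> ^ b i * P
        + of_nat (b i) * cnj c * \<zeta> ^ a i * cnj \<zeta> ^ (b i - 1) * P - \<zeta> ^ a i * cnj \<zeta> ^ b i * P * \<beta>)) (at (of_real 0))"
    unfolding \<psi>_def by (rule derivative_eq_intros refl)+ (simp add: algebra_simps)
  from has_vector_derivative_real_field[OF this]
  have "((\<lambda>t. cmonomial a b (z + t *\<^sub>R axis i c) * exp (- herm_quad Q (z + t *\<^sub>R axis i c)))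
     has_vector_derivative exp (- q) * (of_nat (a i) * c * \<zeta> ^ (a i - 1) * cnj \<zeta> ^ b i * P
        + of_nat (b i) * cnj c * \<zeta> ^ a i * cnj \<zeta> ^ (b i - 1) * P - \<zeta> ^ a i * cnj \<zeta> ^ b i * P * \<beta>)) (at 0)"
    by (simp add: \<psi>)
  moreover have "cmonomial (a(i := a i - 1)) b z = \<zeta> ^ (a i - 1) * cnj \<zeta> ^ b i * P"
    and "cmonomial a (b(i := b i - 1)) z = \<zeta> ^ a i * cnj \<zeta> ^ (b i - 1) * P"
    and "cmonomial a b z = \<zeta> ^ a i * cnj \<zeta> ^ b i * P"
    by (subst cmonomial_split[where i=i]; simp add: \<zeta>_def P_def)+
  ultimately show ?thesis
    by (simp add: q_def \<beta>_def algebra_simps)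
qed

definition gmoment :: "complex ^ 'p ^ 'p \<Rightarrow> ('p \<Rightarrow> nat) \<Rightarrow> ('p \<Rightarrow> nat) \<Rightarrow> complex" where
  "gmoment Q a b = (\<integral>z. cmonomial a b z * exp (- herm_quad Q z) \<partial>lborel)"

lemma integrable_cmonomial_gaussian:
  fixes Q :: "complex ^ 'p ^ 'p"
  assumes "\<And>z. z \<noteq> 0 \<Longrightarrow> Re (herm_quad Q z) > 0"
  shows "integrable lborel (\<lambda>z. cmonomial a b z * exp (- herm_quad Q z))"
proof -
  obtain c where c: "c > 0" "\<And>z. Re (herm_quad Q z) \<ge> c * (norm z)\<^sup>2"
    using herm_quad_coercive assms by blast
  show ?thesis
  proof (rule integrable_power_gaussian_bounded[OF _ c(1)])
    show "(\<lambda>z. cmonomial a b z * exp (- herm_quad Q z)) \<in> borel_measurable lborel"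
      by (simp, intro borel_measurable_continuous_onI continuous_intros
          continuous_on_compose2[OF continuous_on_cmonomial] continuous_on_compose2[OF continuous_on_herm_quad]) auto
    show "norm (cmonomial a b z * exp (- herm_quad Q z))
        \<le> norm z ^ (\<Sum>j\<in>UNIV. a j + b j) * exp (- c * (norm z)\<^sup>2)" for z
      unfolding norm_mult using c(2)[of z] by (intro mult_mono norm_cmonomial_le) auto
  qed
qed

lemma gmoment_directional_ibp:
  fixes Q :: "complex ^ 'p ^ 'p"
  assumes pos: "\<And>z. z \<noteq> 0 \<Longrightarrow> Re (herm_quad Q z) > 0"
  shows "of_nat (a i) * c * gmoment Q (a(i := a i - 1)) b + of_nat (b i) * cnj c * gmoment Q a (b(i := b i - 1))
    = (\<Sum>k\<in>UNIV. cnj c * Q $ i $ k * gmoment Q (a(k := Suc (a k))) b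
                + c * Q $ k $ i * gmoment Q a (b(k := Suc (b k))))"
proof -
  let ?M = "\<lambda>a b z. cmonomial a b z * exp (- herm_quad Q z)"
  have int: "integrable lborel (?M a' b')" for a' b'
    using integrable_cmonomial_gaussian[OF pos] .
  define G where "G z = of_nat (a i) * c * ?M (a(i := a i - 1)) b z + of_nat (b i) * cnj c * ?M a (b(i := b i - 1)) z
      - (\<Sum>k\<in>UNIV. cnj c * Q $ i $ k * ?M (a(k := Suc (a k))) b z + c * Q $ k $ i * ?M a (b(k := Suc (b k))) z)"
    for z
  have "((\<lambda>t. ?M a b (z + t *\<^sub>R axis i c)) has_vector_derivative G z) (at 0)" for z
  proof -
    have "cmonomial a b z * (cnj c * herm_quad_dcnj Q i z + c * herm_quad_dz Q i z)
        = (\<Sum>k\<in>UNIV. cnj c * Q $ i $ k * cmonomial (a(k := Suc (a k))) b z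
                    + c * Q $ k $ i * cmonomial a (b(k := Suc (b k))) z)"
      by (simp add: herm_quad_dcnj_def herm_quad_dz_def sum_distrib_left sum.distrib algebra_simps
          flip: cmonomial_mult_nth cmonomial_mult_cnj_nth)
    then have "G z = exp (- herm_quad Q z) * (of_nat (a i) * c * cmonomial (a(i := a i - 1)) b z
         + of_nat (b i) * cnj c * cmonomial a (b(i := b i - 1)) z
         - cmonomial a b z * (cnj c * herm_quad_dcnj Q i z + c * herm_quad_dz Q i z))"
      by (simp add: G_def algebra_simps sum_distrib_left sum.distrib)
    then show ?thesis
      using has_vector_derivative_cmonomial_gaussian_axis[of a b z i c Q] by simp
  qed
  then have "integral\<^sup>L lborel G = 0"
  proof (rule lborel_integral_directional_derivative_eq_0)
    show "continuous_on UNIV G"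
      unfolding G_def
      by (intro continuous_intros continuous_on_compose2[OF continuous_on_cmonomial]
          continuous_on_compose2[OF continuous_on_herm_quad]) auto
    show "integrable lborel G"
      unfolding G_def by (intro Bochner_Integration.integrable_diff Bochner_Integration.integrable_add
          Bochner_Integration.integrable_sum integrable_mult_right int)
  qed (rule int)
  moreover have "integral\<^sup>L lborel G
      = of_nat (a i) * c * gmoment Q (a(i := a i - 1)) b + of_nat (b i) * cnj c * gmoment Q a (b(i := b i - 1))
        - (\<Sum>k\<in>UNIV. cnj c * Q $ i $ k * gmoment Q (a(k := Suc (a k))) b
                    + c * Q $ k $ i * gmoment Q a (b(k := Suc (b k))))"
    unfolding G_def gmoment_def by (simp add: int)
  ultimately show ?thesis by simp
qed

lemma gmoment_ibp:
  fixes Q :: "complex ^ 'p ^ 'p"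
  assumes pos: "\<And>z. z \<noteq> 0 \<Longrightarrow> Re (herm_quad Q z) > 0"
  shows gmoment_ibp_nth:
      "(\<Sum>k\<in>UNIV. Q $ i $ k * gmoment Q (a(k := Suc (a k))) b) = of_nat (b i) * gmoment Q a (b(i := b i - 1))"
    and gmoment_ibp_cnj_nth:
      "(\<Sum>k\<in>UNIV. Q $ k $ i * gmoment Q a (b(k := Suc (b k)))) = of_nat (a i) * gmoment Q (a(i := a i - 1)) b"
proof -
  define x where "x = of_nat (a i) * gmoment Q (a(i := a i - 1)) b"
  define y where "y = of_nat (b i) * gmoment Q a (b(i := b i - 1))"
  define u where "u = (\<Sum>k\<in>UNIV. Q $ i $ k * gmoment Q (a(k := Suc (a k))) b)"
  define v where "v = (\<Sum>k\<in>UNIV. Q $ k $ i * gmoment Q a (b(k := Suc (b k))))"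
  have ibp: "x * c + y * cnj c = cnj c * u + c * v" for c
    using gmoment_directional_ibp[OF pos, of a i c b]
    by (simp add: x_def y_def u_def v_def sum.distrib sum_distrib_left mult_ac)
  have "x + y = u + v"
    using ibp[of 1] by simp
  moreover have "\<i> * (x - y) = \<i> * (v - u)"
    using ibp[of \<i>] by (simp add: algebra_simps)
  then have "x - y = v - u"
    by simp
  ultimately show "u = y" "v = x"
    by algebra+
qed

section \<open>The moment recursion\<close>

lemma gmoment_recursion_nth:
  fixes Q S :: "complex ^ 'p ^ 'p"
  assumes SQ: "S ** Q = mat 1" and pos: "\<And>z. z \<noteq> 0 \<Longrightarrow> Re (herm_quad Q z) > 0"
  shows "gmoment Q (a(h := Suc (a h))) b
    = (\<Sum>k\<in>UNIV. S $ h $ k * of_nat (b k) * gmoment Q a (b(k := b k - 1)))"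
proof -
  have "(\<Sum>k\<in>UNIV. S $ h $ k * of_nat (b k) * gmoment Q a (b(k := b k - 1)))
      = (\<Sum>k\<in>UNIV. S $ h $ k * (\<Sum>j\<in>UNIV. Q $ k $ j * gmoment Q (a(j := Suc (a j))) b))"
    by (intro sum.cong refl) (simp add: gmoment_ibp_nth[OF pos])
  also have "\<dots> = (\<Sum>k\<in>UNIV. \<Sum>j\<in>UNIV. S $ h $ k * Q $ k $ j * gmoment Q (a(j := Suc (a j))) b)"
    by (simp add: sum_distrib_left mult.assoc)
  also have "\<dots> = (\<Sum>j\<in>UNIV. (S ** Q) $ h $ j * gmoment Q (a(j := Suc (a j))) b)"
    by (subst sum.swap) (simp add: matrix_matrix_mult_def sum_distrib_right)
  also have "\<dots> = gmoment Q (a(h := Suc (a h))) b"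
    by (simp add: SQ mat_def if_distrib[of "\<lambda>x. x * _"] cong: if_cong)
  finally show ?thesis ..
qed

lemma gmoment_recursion_cnj_nth:
  fixes Q S :: "complex ^ 'p ^ 'p"
  assumes QS: "Q ** S = mat 1" and pos: "\<And>z. z \<noteq> 0 \<Longrightarrow> Re (herm_quad Q z) > 0"
  shows "gmoment Q a (b(k := Suc (b k)))
    = (\<Sum>h\<in>UNIV. S $ h $ k * of_nat (a h) * gmoment Q (a(h := a h - 1)) b)"
proof -
  have "(\<Sum>h\<in>UNIV. S $ h $ k * of_nat (a h) * gmoment Q (a(h := a h - 1)) b)
      = (\<Sum>h\<in>UNIV. S $ h $ k * (\<Sum>j\<in>UNIV. Q $ j $ h * gmoment Q a (b(j := Suc (b j)))))"
    by (intro sum.cong refl) (simp add: gmoment_ibp_cnj_nth[OF pos])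
  also have "\<dots> = (\<Sum>h\<in>UNIV. \<Sum>j\<in>UNIV. Q $ j $ h * S $ h $ k * gmoment Q a (b(j := Suc (b j))))"
    by (simp add: sum_distrib_left mult_ac)
  also have "\<dots> = (\<Sum>j\<in>UNIV. (Q ** S) $ j $ k * gmoment Q a (b(j := Suc (b j))))"
    by (subst sum.swap) (simp add: matrix_matrix_mult_def sum_distrib_right)
  also have "\<dots> = gmoment Q a (b(k := Suc (b k)))"
    by (simp add: QS mat_def if_distrib[of "\<lambda>x. x * _"] cong: if_cong)
  finally show ?thesis ..
qed

lemma nu_eq_gmoment:
  "nu S a b = gmoment (matrix_inv S) a b / (of_real (pi ^ CARD('p)) * det S)"
  for S :: "complex ^ 'p ^ 'p"
  unfolding nu_def gmoment_def cgauss_density_def cmonomial_def by simp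

lemma nu_recursion_nth:
  fixes S :: "complex ^ 'p ^ 'p"
  assumes "hermitian_pd S" "n h \<noteq> 0"
  shows "nu S n m = (\<Sum>k\<in>UNIV. S $ h $ k * of_nat (m k) * nu S (n(h := n h - 1)) (m(k := m k - 1)))"
proof -
  have "n = (n(h := n h - 1))(h := Suc ((n(h := n h - 1)) h))"
    using assms(2) by auto
  then show ?thesis
    using gmoment_recursion_nth[OF hermitian_pd_matrix_inv(1,3)[OF assms(1)], of "n(h := n h - 1)" h m]
    by (simp add: nu_eq_gmoment sum_divide_distrib)
qed

lemma nu_recursion_cnj_nth:
  fixes S :: "complex ^ 'p ^ 'p"
  assumes "hermitian_pd S" "m k \<noteq> 0"
  shows "nu S n m = (\<Sum>h\<in>UNIV. S $ h $ k * of_nat (n h) * nu S (n(h := n h - 1)) (m(k := m k - 1)))"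
proof -
  have "m = (m(k := m k - 1))(k := Suc ((m(k := m k - 1)) k))"
    using assms(2) by auto
  then show ?thesis
    using gmoment_recursion_cnj_nth[OF hermitian_pd_matrix_inv(2,3)[OF assms(1)], of n "m(k := m k - 1)" k]
    by (simp add: nu_eq_gmoment sum_divide_distrib)
qed

lemma Amat_Inl_eq_0: "h \<notin> Nset n \<Longrightarrow> c \<in> colset S n m \<Longrightarrow> Amat S n m (Inl h) c = 0"
  by (auto simp: colset_def Amat_def)

lemma Amat_Inr_eq_0: "k \<notin> Mset m \<Longrightarrow> c \<in> colset S n m \<Longrightarrow> Amat S n m (Inr k) c = 0"
  by (auto simp: colset_def SN_def Amat_def)

lemma sum_Amat_Inl_tvec:
  fixes S :: "complex ^ 'p ^ 'p"
  assumes "h \<in> Nset n"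
  shows "(\<Sum>c\<in>colset S n m. Amat S n m (Inl h) c * tvec S n m c)
    = (\<Sum>k\<in>UNIV. S $ h $ k * of_nat (m k) * nu S (n(h := n h - 1)) (m(k := m k - 1)))"
proof -
  have "(\<Sum>c\<in>colset S n m. Amat S n m (Inl h) c * tvec S n m c)
      = (\<Sum>c\<in>Pair h ` SN S m h. Amat S n m (Inl h) c * tvec S n m c)"
    using assms by (intro sum.mono_neutral_right) (auto simp: colset_def Amat_def)
  also have "\<dots> = (\<Sum>k\<in>SN S m h. S $ h $ k * of_nat (m k) * nu S (n(h := n h - 1)) (m(k := m k - 1)))"
    by (subst sum.reindex) (auto simp: inj_on_def Amat_def tvec_def)
  also have "\<dots> = (\<Sum>k\<in>UNIV. S $ h $ k * of_nat (m k) * nu S (n(h := n h - 1)) (m(k := m k - 1)))"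
    by (intro sum.mono_neutral_left) (auto simp: SN_def Mset_def)
  finally show ?thesis .
qed

lemma sum_Amat_Inr_tvec:
  fixes S :: "complex ^ 'p ^ 'p"
  assumes "k \<in> Mset m"
  shows "(\<Sum>c\<in>colset S n m. Amat S n m (Inr k) c * tvec S n m c)
    = (\<Sum>h\<in>UNIV. S $ h $ k * of_nat (n h) * nu S (n(h := n h - 1)) (m(k := m k - 1)))"
proof -
  let ?H = "{h \<in> Nset n. S $ h $ k \<noteq> 0}"
  have "(\<Sum>c\<in>colset S n m. Amat S n m (Inr k) c * tvec S n m c)
      = (\<Sum>c\<in>(\<lambda>h. (h, k)) ` ?H. Amat S n m (Inr k) c * tvec S n m c)"
    using assms by (intro sum.mono_neutral_right) (auto simp: colset_def SN_def Amat_def)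
  also have "\<dots> = (\<Sum>h\<in>?H. S $ h $ k * of_nat (n h) * nu S (n(h := n h - 1)) (m(k := m k - 1)))"
    by (subst sum.reindex) (auto simp: inj_on_def Amat_def tvec_def)
  also have "\<dots> = (\<Sum>h\<in>UNIV. S $ h $ k * of_nat (n h) * nu S (n(h := n h - 1)) (m(k := m k - 1)))"
    by (intro sum.mono_neutral_left) (auto simp: Nset_def)
  finally show ?thesis .
qed

theorem corollary3p9:
  fixes S :: "complex ^ 'p ^ 'p" and n m :: "'p \<Rightarrow> nat"
  assumes "hermitian_pd S"
  shows "(\<forall>r :: 'p + 'p. (\<Sum>c\<in>colset S n m. Amat S n m r c * tvec S n m c) = nu S n m * bvec n m r)
    \<and> (\<forall>h. h \<notin> Nset n \<longrightarrow> (\<forall>c\<in>colset S n m. Amat S n m (Inl h) c = 0) \<and> bvec n m (Inl h) = 0)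
    \<and> (\<forall>k. k \<notin> Mset m \<longrightarrow> (\<forall>c\<in>colset S n m. Amat S n m (Inr k) c = 0) \<and> bvec n m (Inr k) = 0)"
proof (intro conjI allI impI ballI)
  fix r :: "'p + 'p"
  show "(\<Sum>c\<in>colset S n m. Amat S n m r c * tvec S n m c) = nu S n m * bvec n m r"
  proof (cases r)
    case (Inl h)
    then show ?thesis
      using sum_Amat_Inl_tvec[of h n S m] nu_recursion_nth[OF assms, of n h m] Amat_Inl_eq_0[of h n _ S m]
      by (cases "h \<in> Nset n") (auto simp: bvec_def Nset_def)
  next
    case (Inr k)
    then show ?thesis
      using sum_Amat_Inr_tvec[of k m S n] nu_recursion_cnj_nth[OF assms, of m k n] Amat_Inr_eq_0[of k m _ S n]
      by (cases "k \<in> Mset m") (auto simp: bvec_def Mset_def)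
  qed
qed (auto simp: Amat_Inl_eq_0 Amat_Inr_eq_0 bvec_def)

end
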